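(* Let $k\ge1$ be an integer, $a\in\{0,1\}$, $\delta=\delta_{a,1}$. For every integer $M\ge0$, $$\sum_{\substack{n_1,\dots,n_{k+1}\ge0\\ n_{k+1}\equiv a\ (\mathrm{mod}\ 2)}}\frac{q^{N_1^2+\cdots+N_{k+1}^2}(q)_{2M}}{(q)_{M-N_1}(q)_{n_1}\cdots(q)_{n_k}(q^2;q^2)_{n_{k+1}}(q;q^2)_{n_k+n_{k+1}}}$$ $$=\sum_{j\in\mathbb Z}q^{12(2+3k)j^2+2j(1-6\delta(1+k))+(1+k)\delta}\begin{bmatrix}2M\\ M-6j+a\end{bmatrix}_q-\sum_{j\in\mathbb Z}q^{12(2+3k)j^2+2j(-7-12k-6\delta(1+k))+2+k(a+2)^2+5\delta}\begin{bmatrix}2M\\ M-6j+a+2\end{bmatrix}_q,$$ where $N_i:=n_i+n_{i+1}+\cdots+n_{k+1}$ for $1\le i\le k+1$.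
   Context: $q$ is complex with $|q|<1$. $(a;q)_n=\prod_{j=0}^{n-1}(1-aq^j)$ for $n\ge0$; $(q)_n=(q;q)_n$; $1/(q)_n:=0$ for $n<0$. The Gaussian binomial is $\begin{bmatrix}n+m\\ n\end{bmatrix}_q=\frac{(q)_{n+m}}{(q)_n(q)_m}$ if $n,m$ are nonnegative integers and $0$ otherwise. $\delta_{a,1}$ is the Kronecker delta. *)

theory Defs
  imports "HOL-Analysis.Analysis"
begin

definition qpoch :: "complex \<Rightarrow> complex \<Rightarrow> nat \<Rightarrow> complex" where
  "qpoch a q n = (\<Prod>j<n. (1 - a * q ^ j))"

definition inv_qfac :: "complex \<Rightarrow> int \<Rightarrow> complex" where
  "inv_qfac q n = (if n < 0 then 0 else 1 / qpoch q q (nat n))"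

definition qbinom :: "complex \<Rightarrow> int \<Rightarrow> int \<Rightarrow> complex" where
  "qbinom q T B = (if 0 \<le> B \<and> 0 \<le> T - B
      then qpoch q q (nat T) / (qpoch q q (nat B) * qpoch q q (nat (T - B))) else 0)"

end

theory Submission
  imports Defs
begin

(*
  A Bailey-chain proof of the identity.

  Put  beta_0(N) = sum over s <= N, s == a (mod 2), of q^(s^2) / ((q^2;q^2)_s (q)_(N-s) (q;q^2)_N).

  1. Base identity (k = 0).  (q)_(2N) beta_0(N) is a difference of two theta-weighted sums of
     Gaussian binomials [2N; N-6j+a] and [2N; N-6j+a+2].  Multiplied out (Lsum resp. R), both
     sides satisfy the same coupled second-order recurrence in N, jointly for the parities a = 0, 1,
     and agree for N = 0, 1.  For R the recurrence comes from the q-Pascal rules applied to theta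
     sums; for Lsum from the recurrence of 1/(q)_n.
  2. Bailey lemma.  For the pairs 1/((q)_(N-r) (q)_(N+r)),
       sum_(N <= X) q^(N^2) / (q)_(X-N) * 1/((q)_(N-r) (q)_(N+r)) = q^(r^2) / ((q)_(X-r) (q)_(X+r)),
     a shifted form of a finite Durfee-rectangle identity.  Iterating it k times on the expansion
     of step 1 adds k r^2 to the exponents and yields beta_k(X).
  3. The k-fold multisum of the theorem equals beta_k(M): peel off n_1 and induct on k.
  Finally (q)_(2M) / ((q)_(M-r) (q)_(M+r)) = [2M; M-r], which is the theorem.
*)


lemma one_minus_power_nonzero:
  fixes q :: complex
  assumes "norm q < 1" "n > 0"
  shows "1 - q ^ n \<noteq> 0"
proof
  assume "1 - q ^ n = 0"
  hence "norm (q ^ n) = 1" by simp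
  moreover have "norm (q ^ n) < 1"
    using assms by (simp add: norm_power power_less_one_iff)
  ultimately show False by simp
qed

lemma qpoch_0 [simp]: "qpoch a q 0 = 1"
  by (simp add: qpoch_def)

lemma qpoch_Suc: "qpoch a q (Suc n) = qpoch a q n * (1 - a * q ^ n)"
  by (simp add: qpoch_def)

lemma qpoch_nonzero:
  fixes a q :: complex
  assumes "norm a < 1" "norm q \<le> 1"
  shows "qpoch a q n \<noteq> 0"
proof -
  have "norm (a * q ^ j) < 1" for j
  proof -
    have "norm (a * q ^ j) \<le> norm a"
      using assms(2) by (simp add: norm_mult norm_power mult_left_le power_le_one)
    thus ?thesis using assms(1) by linarith
  qed
  hence "1 - a * q ^ j \<noteq> 0" for j
    by (metis norm_one order_less_irrefl right_minus_eq)
  thus ?thesis by (simp add: qpoch_def)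
qed

lemma qfac_nonzero: "norm q < 1 \<Longrightarrow> qpoch q q n \<noteq> 0"
  by (rule qpoch_nonzero) simp_all

lemma qpoch_q_q2_nonzero: "norm q < 1 \<Longrightarrow> qpoch q (q^2) n \<noteq> 0"
  by (rule qpoch_nonzero) (simp_all add: norm_power power_le_one)

text \<open>1/(q)_n, extended by zero to negative n, and its one-step recurrence.  Working with
  inv_qfac instead of quotients makes boundary terms vanish automatically.\<close>

lemma inv_qfac_nat: "inv_qfac q (int n) = 1 / qpoch q q n"
  by (simp add: inv_qfac_def)

lemma inv_qfac_neg: "n < 0 \<Longrightarrow> inv_qfac q n = 0"
  by (simp add: inv_qfac_def)

lemma inv_qfac_0 [simp]: "inv_qfac q 0 = 1"
  by (simp add: inv_qfac_def)

lemma inv_qfac_Suc: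
  assumes "norm q < 1"
  shows "inv_qfac q (int n) = (1 - q ^ Suc n) * inv_qfac q (int (Suc n))"
  using qfac_nonzero[OF assms, of n] one_minus_power_nonzero[OF assms, of "Suc n"]
  by (simp add: inv_qfac_nat qpoch_Suc del: of_nat_Suc)

lemma inv_qfac_pred:
  assumes "norm q < 1"
  shows "(1 - q powi m) * inv_qfac q m = inv_qfac q (m - 1)"
proof (cases "m > 0")
  case True
  then obtain n where m: "m = int (Suc n)" by (metis gr0_implies_Suc pos_int_cases)
  have "m - 1 = int n" "q powi m = q ^ Suc n" unfolding m by (simp_all only: power_int_of_nat)
  thus ?thesis using inv_qfac_Suc[OF assms, of n] unfolding m by simp
next
  case False
  thus ?thesis by (cases "m = 0") (auto simp: inv_qfac_neg)
qed

text \<open>Gaussian binomials are products of inv_qfac values, which gives uniform proofs of the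
  q-Pascal rules over all integer bottom indices.\<close>

lemma qbinom_outside: "B < 0 \<or> T < B \<Longrightarrow> qbinom q T B = 0"
  by (auto simp: qbinom_def)

lemma qbinom_inv_qfac:
  "0 \<le> T \<Longrightarrow> qbinom q T B = qpoch q q (nat T) * inv_qfac q B * inv_qfac q (T - B)"
  by (auto simp: qbinom_def inv_qfac_def)

lemma qbinom_sym: "qbinom q T B = qbinom q T (T - B)"
  by (auto simp: qbinom_def mult.commute)

lemma inv_qfac_pascal:
  assumes q: "norm q < 1"
  shows "(1 - q ^ Suc m) * (inv_qfac q (int i) * inv_qfac q (int (Suc m) - int i))
       = inv_qfac q (int i - 1) * inv_qfac q (int (Suc m) - int i)
         + q ^ i * (inv_qfac q (int i) * inv_qfac q (int m - int i))"
proof (cases "i \<le> Suc m")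
  case True
  have down_i: "inv_qfac q (int i - 1) = (1 - q ^ i) * inv_qfac q (int i)"
    using inv_qfac_pred[OF q, of "int i"] by (simp add: power_int_of_nat)
  have pw: "q powi (int (Suc m) - int i) = q ^ (Suc m - i)"
    using True by (metis of_nat_diff power_int_of_nat)
  have down_mi:
    "inv_qfac q (int m - int i) = (1 - q ^ (Suc m - i)) * inv_qfac q (int (Suc m) - int i)"
    using inv_qfac_pred[OF q, of "int (Suc m) - int i"] unfolding pw by simp
  have "q ^ i * q ^ (Suc m - i) = q ^ Suc m"
    using True by (simp flip: power_add)
  thus ?thesis unfolding down_i down_mi by (simp add: algebra_simps)
qed (simp add: inv_qfac_neg)

lemma qbinom_pascal:
  assumes q: "norm q < 1" and n: "n \<ge> 1"
  shows "qbinom q n k = qbinom q (n - 1) (k - 1) + q powi k * qbinom q (n - 1) k"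
proof (cases "k < 0")
  case False
  then obtain i where k: "k = int i" by (metis nonneg_int_cases not_less)
  obtain m where nm: "n = int (Suc m)"
    using n by (metis int_one_le_iff_zero_less pos_int_cases gr0_implies_Suc)
  have "qbinom q n k
      = qpoch q q m * ((1 - q ^ Suc m) * (inv_qfac q (int i) * inv_qfac q (int (Suc m) - int i)))"
    by (simp add: qbinom_inv_qfac nm k qpoch_Suc del: of_nat_Suc)
  also have "\<dots> = qbinom q (n - 1) (k - 1) + q powi k * qbinom q (n - 1) k"
    unfolding inv_qfac_pascal[OF q] by (simp add: qbinom_inv_qfac nm k power_int_of_nat algebra_simps)
  finally show ?thesis .
qed (simp add: qbinom_outside)

lemma qbinom_pascal':
  assumes q: "norm q < 1" and n: "n \<ge> 1"
  shows "qbinom q n k = qbinom q (n - 1) k + q powi (n - k) * qbinom q (n - 1) (k - 1)"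
proof -
  have "qbinom q n k = qbinom q n (n - k)" by (rule qbinom_sym)
  also have "\<dots> = qbinom q (n - 1) (n - k - 1) + q powi (n - k) * qbinom q (n - 1) (n - k)"
    by (rule qbinom_pascal[OF q n])
  also have "qbinom q (n - 1) (n - k - 1) = qbinom q (n - 1) k"
    using qbinom_sym[of q "n - 1" k] by (simp add: algebra_simps)
  also have "qbinom q (n - 1) (n - k) = qbinom q (n - 1) (k - 1)"
    using qbinom_sym[of q "n - 1" "k - 1"] by simp
  finally show ?thesis .
qed

lemma qbinom_top_Suc:
  assumes q: "norm q < 1" and n: "n \<ge> 1"
  shows "(1 - q ^ nat n) * qbinom q (n - 1) k = (1 - q powi (n - k)) * qbinom q n k"
proof -
  obtain m where m: "nat n = Suc m" "nat (n - 1) = m" using n by (intro that[of "nat (n - 1)"]) auto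
  have "(1 - q powi (n - k)) * qbinom q n k
      = qpoch q q (Suc m) * inv_qfac q k * ((1 - q powi (n - k)) * inv_qfac q (n - k))"
    using n by (simp add: qbinom_inv_qfac m(1))
  also have "(1 - q powi (n - k)) * inv_qfac q (n - k) = inv_qfac q (n - 1 - k)"
    using inv_qfac_pred[OF q, of "n - k"] by (simp add: algebra_simps)
  also have "qpoch q q (Suc m) * inv_qfac q k * inv_qfac q (n - 1 - k)
      = (1 - q ^ nat n) * qbinom q (n - 1) k"
    using n by (simp add: qbinom_inv_qfac m qpoch_Suc)
  finally show ?thesis by simp
qed

lemma summable_on_finite_support:
  fixes f :: "'a \<Rightarrow> complex"
  assumes "finite S" "\<And>x. x \<notin> S \<Longrightarrow> f x = 0"
  shows "f summable_on UNIV"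
proof -
  have "f summable_on S" using assms(1) by simp
  moreover have "f summable_on S \<longleftrightarrow> f summable_on UNIV"
    by (rule summable_on_cong_neutral) (use assms(2) in auto)
  ultimately show ?thesis by simp
qed

lemma infsum_finite_support:
  fixes f :: "'a \<Rightarrow> complex"
  assumes "finite S" "\<And>x. x \<notin> S \<Longrightarrow> f x = 0"
  shows "(\<Sum>\<^sub>\<infinity>x. f x) = sum f S"
proof -
  have "infsum f UNIV = infsum f S"
    by (rule infsum_cong_neutral) (use assms(2) in auto)
  thus ?thesis using assms(1) by simp
qed

lemma infsum_diff:
  fixes f g :: "'a \<Rightarrow> complex"
  assumes "f summable_on A" "g summable_on A"
  shows "infsum (\<lambda>x. f x - g x) A = infsum f A - infsum g A"
proof -
  have "(\<lambda>x. - g x) summable_on A" using assms(2) summable_on_uminus by blast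
  hence "infsum (\<lambda>x. f x + - g x) A = infsum f A + infsum (\<lambda>x. - g x) A"
    using infsum_add[OF assms(1)] by blast
  thus ?thesis by (simp add: infsum_uminus)
qed

lemma infsum_int_shift: "(\<Sum>\<^sub>\<infinity>i::int. f i) = (\<Sum>\<^sub>\<infinity>j::int. f (j + d))"
  by (rule infsum_reindex_bij_betw[symmetric]) (rule bij_betwI[where g="\<lambda>i. i - d"], auto)

lemma infsum_int_reflect: "(\<Sum>\<^sub>\<infinity>i::int. f i) = (\<Sum>\<^sub>\<infinity>j::int. f (- j))"
  by (rule infsum_reindex_bij_betw[symmetric]) (rule bij_betwI[where g=uminus], auto)

text \<open>It is finite in disguise, since the binomial vanishes unless 0 <= 6i+e <= n.  Both sides of
  the theorem are differences of two such sums, after the substitution j = -i resp. a shift.\<close>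

definition theta_sum :: "complex \<Rightarrow> int \<Rightarrow> (int \<Rightarrow> int) \<Rightarrow> int \<Rightarrow> complex" where
  "theta_sum q n c e = (\<Sum>\<^sub>\<infinity>i::int. q powi (c i) * qbinom q n (6*i + e))"

lemma theta_sum_summable: "(\<lambda>i::int. f i * qbinom q n (6*i + e)) summable_on UNIV"
proof (rule summable_on_finite_support[of "{-\<bar>e\<bar>..\<bar>n\<bar>+\<bar>e\<bar>}"])
  fix i assume "i \<notin> {-\<bar>e\<bar>..\<bar>n\<bar>+\<bar>e\<bar>}"
  hence "6*i + e < 0 \<or> n < 6*i + e" by auto
  thus "f i * qbinom q n (6*i + e) = 0" by (simp add: qbinom_outside)
qed simp

lemma theta_sum_cong: "(\<And>i. c i = d i) \<Longrightarrow> theta_sum q n c e = theta_sum q n d e"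
  by (simp add: theta_sum_def)

lemma theta_sum_scale:
  assumes "q \<noteq> 0"
  shows "q powi k * theta_sum q n c e = theta_sum q n (\<lambda>i. c i + k) e"
  unfolding theta_sum_def infsum_cmult_right'[symmetric]
  by (rule infsum_cong) (simp add: power_int_add assms)

lemma theta_sum_shift: "theta_sum q n c e = theta_sum q n (\<lambda>i. c (i + 1)) (e + 6)"
  unfolding theta_sum_def by (subst infsum_int_shift[where d=1]) (simp add: algebra_simps)

lemma theta_sum_single:
  assumes "\<And>i. i \<noteq> i0 \<Longrightarrow> q powi (c i) * qbinom q n (6*i+e) = 0"
  shows "theta_sum q n c e = q powi (c i0) * qbinom q n (6*i0+e)"
  unfolding theta_sum_def by (subst infsum_finite_support[of "{i0}"]) (use assms in auto)

lemma theta_sum_zero: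
  assumes "\<And>i. q powi (c i) * qbinom q n (6*i+e) = 0"
  shows "theta_sum q n c e = 0"
  unfolding theta_sum_def by (subst infsum_finite_support[of "{}"]) (use assms in auto)

lemma theta_sum_single_index:
  assumes "\<And>i. i \<noteq> i0 \<Longrightarrow> 6*i+e < 0 \<or> n < 6*i+e"
  shows "theta_sum q n c e = q powi (c i0) * qbinom q n (6*i0+e)"
  by (rule theta_sum_single) (simp add: qbinom_outside[OF assms])

lemma theta_sum_zero_index:
  assumes "\<And>i. 6*i+e < 0 \<or> n < 6*i+e"
  shows "theta_sum q n c e = 0"
  by (rule theta_sum_zero) (simp add: qbinom_outside[OF assms])

lemma theta_sum_pascal:
  assumes q: "norm q < 1" "q \<noteq> 0" and n: "n \<ge> 1"
  shows "theta_sum q n c e = theta_sum q (n-1) c (e-1) + theta_sum q (n-1) (\<lambda>i. c i + 6*i + e) e"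
proof -
  have "theta_sum q n c e = (\<Sum>\<^sub>\<infinity>i::int. q powi (c i) * qbinom q (n-1) (6*i + (e-1))
         + q powi (c i + 6*i + e) * qbinom q (n-1) (6*i + e))"
    unfolding theta_sum_def
    by (rule infsum_cong) (simp add: qbinom_pascal[OF q(1) n] power_int_add q(2) algebra_simps)
  also have "\<dots> = theta_sum q (n-1) c (e-1) + theta_sum q (n-1) (\<lambda>i. c i + 6*i + e) e"
    unfolding theta_sum_def by (rule infsum_add) (rule theta_sum_summable)+
  finally show ?thesis .
qed

lemma theta_sum_pascal':
  assumes q: "norm q < 1" "q \<noteq> 0" and n: "n \<ge> 1"
  shows "theta_sum q n c e = theta_sum q (n-1) c e + theta_sum q (n-1) (\<lambda>i. c i + n - 6*i - e) (e-1)"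
proof -
  have "theta_sum q n c e = (\<Sum>\<^sub>\<infinity>i::int. q powi (c i) * qbinom q (n-1) (6*i + e)
         + q powi (c i + n - 6*i - e) * qbinom q (n-1) (6*i + (e-1)))"
    unfolding theta_sum_def
    by (rule infsum_cong)
      (simp add: qbinom_pascal'[OF q(1) n] power_int_add power_int_diff q(2) algebra_simps)
  also have "\<dots> = theta_sum q (n-1) c e + theta_sum q (n-1) (\<lambda>i. c i + n - 6*i - e) (e-1)"
    unfolding theta_sum_def by (rule infsum_add) (rule theta_sum_summable)+
  finally show ?thesis .
qed

lemma theta_sum_top_Suc:
  assumes q: "norm q < 1" "q \<noteq> 0" and n: "n \<ge> 1"
  shows "(1 - q ^ nat n) * theta_sum q (n-1) c e
       = theta_sum q n c e - theta_sum q n (\<lambda>i. c i + n - 6*i - e) e"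
proof -
  have "(1 - q ^ nat n) * theta_sum q (n-1) c e
      = (\<Sum>\<^sub>\<infinity>i::int. q powi (c i) * ((1 - q ^ nat n) * qbinom q (n-1) (6*i + e)))"
    unfolding theta_sum_def infsum_cmult_right'[symmetric] by (simp add: ac_simps)
  also have "\<dots> = (\<Sum>\<^sub>\<infinity>i::int. q powi (c i) * qbinom q n (6*i + e)
         - q powi (c i + n - 6*i - e) * qbinom q n (6*i + e))"
    unfolding qbinom_top_Suc[OF q(1) n]
    by (rule infsum_cong) (simp add: power_int_add power_int_diff q(2) algebra_simps)
  also have "\<dots> = theta_sum q n c e - theta_sum q n (\<lambda>i. c i + n - 6*i - e) e"
    unfolding theta_sum_def by (rule infsum_diff) (rule theta_sum_summable)+
  finally show ?thesis .
qed

lemma theta_sum_two_steps: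
  assumes q: "norm q < 1" "q \<noteq> 0" and n: "n \<ge> 0"
  shows "theta_sum q (n+2) (\<lambda>i. c i + 1) (e+1) - q * (1 - q powi (n+1)) * theta_sum q n c e
       = theta_sum q (n+1) (\<lambda>i. c i + 6*i + e + 2) (e+1) + theta_sum q (n+1) (\<lambda>i. c i + n + 2 - 6*i - e) e"
proof -
  have top: "n + 1 \<ge> 1" "n + 2 \<ge> 1" using n by simp_all
  have pw: "q ^ nat (n+1) = q powi (n+1)" using n by (simp add: power_int_def)
  have "theta_sum q (n+2) (\<lambda>i. c i + 1) (e+1) = theta_sum q (n+1) (\<lambda>i. c i + 1) e
      + theta_sum q (n+1) (\<lambda>i. c i + 6*i + e + 2) (e+1)"
    using theta_sum_pascal[OF q top(2), of "\<lambda>i. c i + 1" "e+1"] by (simp add: algebra_simps)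
  moreover have "q * (1 - q powi (n+1)) * theta_sum q n c e = theta_sum q (n+1) (\<lambda>i. c i + 1) e
      - theta_sum q (n+1) (\<lambda>i. c i + n + 2 - 6*i - e) e"
  proof -
    have "q * (1 - q powi (n+1)) * theta_sum q n c e
        = q powi 1 * ((1 - q ^ nat (n+1)) * theta_sum q (n+1-1) c e)"
      by (simp add: pw)
    also have "\<dots> = q powi 1 * (theta_sum q (n+1) c e - theta_sum q (n+1) (\<lambda>i. c i + (n+1) - 6*i - e) e)"
      by (simp only: theta_sum_top_Suc[OF q top(1)])
    also have "\<dots> = theta_sum q (n+1) (\<lambda>i. c i + 1) e - theta_sum q (n+1) (\<lambda>i. c i + n + 2 - 6*i - e) e"
      unfolding right_diff_distrib theta_sum_scale[OF q(2)] by (simp add: algebra_simps)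
    finally show ?thesis .
  qed
  ultimately show ?thesis by simp
qed

text \<open>The right-hand sides at top index 2m, for a = 0 (R0) and a = 1 (R1); their companions at
  top index 2m+1; and the gap term Rgap, by which both of them grow from m to m+1.\<close>

definition R0 :: "complex \<Rightarrow> int \<Rightarrow> complex" where
  "R0 q m = theta_sum q (2*m) (\<lambda>i. 24*i^2 - 2*i) m - theta_sum q (2*m) (\<lambda>i. 24*i^2 + 34*i + 12) (m+4)"

definition R1 :: "complex \<Rightarrow> int \<Rightarrow> complex" where
  "R1 q m = theta_sum q (2*m) (\<lambda>i. 24*i^2 + 10*i + 1) (m+1) - theta_sum q (2*m) (\<lambda>i. 24*i^2 + 22*i + 5) (m+3)"

definition R0_odd :: "complex \<Rightarrow> int \<Rightarrow> complex" where
  "R0_odd q m = theta_sum q (2*m+1) (\<lambda>i. 24*i^2 - 2*i) m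
    - theta_sum q (2*m+1) (\<lambda>i. 24*i^2 + 34*i + 12) (m+5)"

definition R1_odd :: "complex \<Rightarrow> int \<Rightarrow> complex" where
  "R1_odd q m = theta_sum q (2*m+1) (\<lambda>i. 24*i^2 + 10*i + 1) (m+2)
    - theta_sum q (2*m+1) (\<lambda>i. 24*i^2 + 22*i + 5) (m+3)"

definition Rgap :: "complex \<Rightarrow> int \<Rightarrow> complex" where
  "Rgap q m = theta_sum q (2*m+1) (\<lambda>i. 24*i^2 + 4*i + m + 1) (m+1)
    - theta_sum q (2*m+1) (\<lambda>i. 24*i^2 + 28*i + m + 9) (m+4)"

text \<open>Raising the top index by one (from 2m to 2m+1 to 2m+2) is one Pascal step applied to
  each of the two theta sums; the surplus terms cancel or make up Rgap.\<close>

context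
  fixes q :: complex and m :: int
  assumes q: "norm q < 1" "q \<noteq> 0" and m: "m \<ge> 0"
begin

lemma R0_odd_eq: "R0_odd q m = R0 q m"
proof -
  have top: "2*m + 1 \<ge> 1" using m by simp
  have "theta_sum q (2*m+1) (\<lambda>i. 24*i^2 - 2*i) m = theta_sum q (2*m) (\<lambda>i. 24*i^2 - 2*i) m
      + theta_sum q (2*m) (\<lambda>i. 24*i^2 - 2*i + (2*m+1) - 6*i - m) (m-1)"
    using theta_sum_pascal'[OF q top] by simp
  moreover have "theta_sum q (2*m+1) (\<lambda>i. 24*i^2 + 34*i + 12) (m+5)
      = theta_sum q (2*m) (\<lambda>i. 24*i^2 + 34*i + 12) (m+4)
      + theta_sum q (2*m) (\<lambda>i. 24*i^2 + 34*i + 12 + 6*i + (m+5)) (m+5)"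
    using theta_sum_pascal[OF q top] by (simp add: algebra_simps)
  moreover have "theta_sum q (2*m) (\<lambda>i. 24*i^2 - 2*i + (2*m+1) - 6*i - m) (m-1)
      = theta_sum q (2*m) (\<lambda>i. 24*i^2 + 34*i + 12 + 6*i + (m+5)) (m+5)"
  proof -
    have e: "m - 1 + 6 = m + 5" by simp
    show ?thesis
      by (subst theta_sum_shift, unfold e) (rule theta_sum_cong, simp add: algebra_simps power2_eq_square)
  qed
  ultimately show ?thesis unfolding R0_odd_def R0_def by simp
qed

lemma R1_odd_eq: "R1_odd q m = R1 q m"
proof -
  have top: "2*m + 1 \<ge> 1" using m by simp
  have "theta_sum q (2*m+1) (\<lambda>i. 24*i^2 + 10*i + 1) (m+2)
      = theta_sum q (2*m) (\<lambda>i. 24*i^2 + 10*i + 1) (m+1)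
      + theta_sum q (2*m) (\<lambda>i. 24*i^2 + 10*i + 1 + 6*i + (m+2)) (m+2)"
    using theta_sum_pascal[OF q top] by (simp add: algebra_simps)
  moreover have "theta_sum q (2*m+1) (\<lambda>i. 24*i^2 + 22*i + 5) (m+3)
      = theta_sum q (2*m) (\<lambda>i. 24*i^2 + 22*i + 5) (m+3)
      + theta_sum q (2*m) (\<lambda>i. 24*i^2 + 22*i + 5 + (2*m+1) - 6*i - (m+3)) (m+2)"
    using theta_sum_pascal'[OF q top] by (simp add: algebra_simps)
  moreover have "theta_sum q (2*m) (\<lambda>i. 24*i^2 + 22*i + 5 + (2*m+1) - 6*i - (m+3)) (m+2)
      = theta_sum q (2*m) (\<lambda>i. 24*i^2 + 10*i + 1 + 6*i + (m+2)) (m+2)"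
    by (rule theta_sum_cong) (simp add: algebra_simps)
  ultimately show ?thesis unfolding R1_odd_def R1_def by simp
qed

lemma R0_Suc: "R0 q (m+1) = R0_odd q m + Rgap q m"
proof -
  have top: "2*m + 2 \<ge> 1" using m by simp
  have "theta_sum q (2*(m+1)) (\<lambda>i. 24*i^2 - 2*i) (m+1) = theta_sum q (2*m+1) (\<lambda>i. 24*i^2 - 2*i) m
      + theta_sum q (2*m+1) (\<lambda>i. 24*i^2 - 2*i + 6*i + (m+1)) (m+1)"
    using theta_sum_pascal[OF q top, of _ "m+1"] by (simp add: algebra_simps)
  moreover have "theta_sum q (2*(m+1)) (\<lambda>i. 24*i^2 + 34*i + 12) (m+1+4)
      = theta_sum q (2*m+1) (\<lambda>i. 24*i^2 + 34*i + 12) (m+5)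
      + theta_sum q (2*m+1) (\<lambda>i. 24*i^2 + 34*i + 12 + (2*m+2) - 6*i - (m+5)) (m+4)"
    using theta_sum_pascal'[OF q top, of _ "m+5"] by (simp add: algebra_simps)
  moreover have
    "theta_sum q (2*m+1) (\<lambda>i. 24*i^2 - 2*i + 6*i + (m+1)) (m+1)
       = theta_sum q (2*m+1) (\<lambda>i. 24*i^2 + 4*i + m + 1) (m+1)"
    "theta_sum q (2*m+1) (\<lambda>i. 24*i^2 + 34*i + 12 + (2*m+2) - 6*i - (m+5)) (m+4)
       = theta_sum q (2*m+1) (\<lambda>i. 24*i^2 + 28*i + m + 9) (m+4)"
    by (rule theta_sum_cong, simp add: algebra_simps)+
  ultimately show ?thesis unfolding R0_def[of q "m+1"] R0_odd_def Rgap_def by simp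
qed

lemma R1_Suc: "R1 q (m+1) = R1_odd q m + Rgap q m"
proof -
  have top: "2*m + 2 \<ge> 1" using m by simp
  have "theta_sum q (2*(m+1)) (\<lambda>i. 24*i^2 + 10*i + 1) (m+1+1)
      = theta_sum q (2*m+1) (\<lambda>i. 24*i^2 + 10*i + 1) (m+2)
      + theta_sum q (2*m+1) (\<lambda>i. 24*i^2 + 10*i + 1 + (2*m+2) - 6*i - (m+2)) (m+1)"
    using theta_sum_pascal'[OF q top, of _ "m+2"] by (simp add: algebra_simps)
  moreover have "theta_sum q (2*(m+1)) (\<lambda>i. 24*i^2 + 22*i + 5) (m+1+3)
      = theta_sum q (2*m+1) (\<lambda>i. 24*i^2 + 22*i + 5) (m+3)
      + theta_sum q (2*m+1) (\<lambda>i. 24*i^2 + 22*i + 5 + 6*i + (m+4)) (m+4)"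
    using theta_sum_pascal[OF q top, of _ "m+4"] by (simp add: algebra_simps)
  moreover have
    "theta_sum q (2*m+1) (\<lambda>i. 24*i^2 + 10*i + 1 + (2*m+2) - 6*i - (m+2)) (m+1)
       = theta_sum q (2*m+1) (\<lambda>i. 24*i^2 + 4*i + m + 1) (m+1)"
    "theta_sum q (2*m+1) (\<lambda>i. 24*i^2 + 22*i + 5 + 6*i + (m+4)) (m+4)
       = theta_sum q (2*m+1) (\<lambda>i. 24*i^2 + 28*i + m + 9) (m+4)"
    by (rule theta_sum_cong, simp add: algebra_simps)+
  ultimately show ?thesis unfolding R1_def[of q "m+1"] R1_odd_def Rgap_def by simp
qed

lemma Rgap_Suc:
  "Rgap q (m+1) = q * (1 - q powi (2*m+2)) * Rgap q m + q powi (2*m+3) * (R0 q (m+1) + R1 q (m+1))"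
proof -
  define A where "A = (\<lambda>i::int. 24*i^2 + 4*i + m + 1)"
  define B where "B = (\<lambda>i::int. 24*i^2 + 28*i + m + 9)"
  have n: "2*m + 1 \<ge> 0" using m by simp
  have idx: "2*m+1+2 = 2*m+3" "2*m+1+1 = 2*m+2" "m+1+1 = m+2" "m+4+1 = m+5" by simp_all
  note stepA = theta_sum_two_steps[OF q n, of A "m+1", unfolded idx]
  note stepB = theta_sum_two_steps[OF q n, of B "m+4", unfolded idx]
  have gap1: "Rgap q (m+1)
      = theta_sum q (2*m+3) (\<lambda>i. A i + 1) (m+2) - theta_sum q (2*m+3) (\<lambda>i. B i + 1) (m+5)"
    unfolding Rgap_def A_def B_def by (simp add: algebra_simps)
  have gap0: "Rgap q m = theta_sum q (2*m+1) A (m+1) - theta_sum q (2*m+1) B (m+4)"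
    unfolding Rgap_def A_def B_def ..
  have "Rgap q (m+1) - q * (1 - q powi (2*m+2)) * Rgap q m
      = (theta_sum q (2*m+3) (\<lambda>i. A i + 1) (m+2) - q * (1 - q powi (2*m+2)) * theta_sum q (2*m+1) A (m+1))
      - (theta_sum q (2*m+3) (\<lambda>i. B i + 1) (m+5) - q * (1 - q powi (2*m+2)) * theta_sum q (2*m+1) B (m+4))"
    unfolding gap1 gap0 by (simp add: algebra_simps)
  also have "\<dots> = theta_sum q (2*m+2) (\<lambda>i. A i + 6*i + (m+1) + 2) (m+2)
      + theta_sum q (2*m+2) (\<lambda>i. A i + (2*m+1) + 2 - 6*i - (m+1)) (m+1)
      - (theta_sum q (2*m+2) (\<lambda>i. B i + 6*i + (m+4) + 2) (m+5)
      + theta_sum q (2*m+2) (\<lambda>i. B i + (2*m+1) + 2 - 6*i - (m+4)) (m+4))"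
    unfolding stepA stepB ..
  also have "\<dots> = theta_sum q (2*m+2) (\<lambda>i. 24*i^2 + 10*i + 1 + (2*m+3)) (m+2)
      + theta_sum q (2*m+2) (\<lambda>i. 24*i^2 - 2*i + (2*m+3)) (m+1)
      - (theta_sum q (2*m+2) (\<lambda>i. 24*i^2 + 34*i + 12 + (2*m+3)) (m+5)
      + theta_sum q (2*m+2) (\<lambda>i. 24*i^2 + 22*i + 5 + (2*m+3)) (m+4))"
  proof -
    have "theta_sum q (2*m+2) (\<lambda>i. A i + 6*i + (m+1) + 2) (m+2)
        = theta_sum q (2*m+2) (\<lambda>i. 24*i^2 + 10*i + 1 + (2*m+3)) (m+2)"
      "theta_sum q (2*m+2) (\<lambda>i. A i + (2*m+1) + 2 - 6*i - (m+1)) (m+1)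
        = theta_sum q (2*m+2) (\<lambda>i. 24*i^2 - 2*i + (2*m+3)) (m+1)"
      "theta_sum q (2*m+2) (\<lambda>i. B i + 6*i + (m+4) + 2) (m+5)
        = theta_sum q (2*m+2) (\<lambda>i. 24*i^2 + 34*i + 12 + (2*m+3)) (m+5)"
      "theta_sum q (2*m+2) (\<lambda>i. B i + (2*m+1) + 2 - 6*i - (m+4)) (m+4)
        = theta_sum q (2*m+2) (\<lambda>i. 24*i^2 + 22*i + 5 + (2*m+3)) (m+4)"
      by (rule theta_sum_cong, simp add: A_def B_def algebra_simps)+
    thus ?thesis by simp
  qed
  also have "\<dots> = q powi (2*m+3) * (R0 q (m+1) + R1 q (m+1))"
    unfolding R0_def R1_def distrib_left right_diff_distrib theta_sum_scale[OF q(2)]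
    by (simp add: algebra_simps)
  finally show ?thesis by (simp add: algebra_simps)
qed

end

definition qfac2 :: "complex \<Rightarrow> nat \<Rightarrow> complex" where
  "qfac2 q n = qpoch (q^2) (q^2) n"

lemma qfac2_Suc: "qfac2 q (Suc n) = qfac2 q n * (1 - q^(2*n+2))"
  by (simp add: qfac2_def qpoch_Suc power_mult[symmetric] power_add[symmetric] algebra_simps)

lemma qfac2_nonzero: "norm q < 1 \<Longrightarrow> qfac2 q n \<noteq> 0"
  unfolding qfac2_def by (rule qpoch_nonzero) (simp_all add: norm_power power_le_one power_less_one_iff)

definition parity_coeff :: "complex \<Rightarrow> nat \<Rightarrow> nat \<Rightarrow> complex" where
  "parity_coeff q a s = (if s mod 2 = a then q^(s^2) / qfac2 q s else 0)"

definition parity_sum :: "complex \<Rightarrow> nat \<Rightarrow> nat \<Rightarrow> complex" where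
  "parity_sum q a m = (\<Sum>s=0..m. parity_coeff q a s * inv_qfac q (int m - int s))"

definition Lsum :: "complex \<Rightarrow> nat \<Rightarrow> nat \<Rightarrow> complex" where
  "Lsum q a m = qfac2 q m * parity_sum q a m"

text \<open>Terms with s > m vanish, so the range of summation may be enlarged at will.\<close>

lemma parity_sum_upto:
  assumes "m \<le> B"
  shows "parity_sum q a m = (\<Sum>s=0..B. parity_coeff q a s * inv_qfac q (int m - int s))"
  unfolding parity_sum_def
  by (rule sum.mono_neutral_left) (use assms in \<open>auto simp: inv_qfac_neg\<close>)

lemma inv_qfac_second_difference:
  assumes q: "norm q < 1"
  shows "inv_qfac q (int n) - (1+q) * inv_qfac q (int n - 1) + q * inv_qfac q (int n - 2)
       = q^(2*n) * inv_qfac q (int n)"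
proof (cases n)
  case 0 thus ?thesis by (simp add: inv_qfac_neg)
next
  case (Suc k)
  have down1: "inv_qfac q (int n - 1) = (1 - q * q^k) * inv_qfac q (int n)"
    using inv_qfac_Suc[OF q, of k] Suc by simp
  have down2: "inv_qfac q (int n - 2) = (1 - q^k) * inv_qfac q (int n - 1)"
    using inv_qfac_pred[OF q, of "int k"] Suc by (simp add: algebra_simps)
  have "q^(2*n) = q^2 * (q^k)^2"
    using Suc by (simp add: power_mult[symmetric] power_add[symmetric] algebra_simps)
  thus ?thesis unfolding down2 down1 by (simp add: algebra_simps power2_eq_square)
qed

lemma parity_coeff_Suc:
  assumes q: "norm q < 1" and a: "a \<le> 1" and t: "t \<le> m + 1"
  shows "parity_coeff q a (Suc t) * (q^(2*(m+1-t)) - q^(2*m+4)) = q^(2*m+3) * parity_coeff q (1-a) t"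
proof (cases "t mod 2 = 1 - a")
  case True
  have par: "Suc t mod 2 = a" using True a by presburger
  have "(Suc t)^2 + 2*(m+1-t) = 2*m+3 + t^2" "(Suc t)^2 + (2*m+4) = 2*m+3 + t^2 + (2*t+2)"
    using t by (simp_all add: power2_eq_square algebra_simps)
  hence "q^((Suc t)^2) * q^(2*(m+1-t)) = q^(2*m+3) * q^(t^2)"
    "q^((Suc t)^2) * q^(2*m+4) = q^(2*m+3) * q^(t^2) * q^(2*t+2)"
    by (simp_all only: power_add[symmetric])
  hence key: "q^((Suc t)^2) * (q^(2*(m+1-t)) - q^(2*m+4)) = (q^(2*m+3) * q^(t^2)) * (1 - q^(2*t+2))"
    by (simp only: right_diff_distrib mult_1_right)
  have nz: "qfac2 q t \<noteq> 0" "1 - q^(2*t+2) \<noteq> 0"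
    using qfac2_nonzero[OF q] one_minus_power_nonzero[OF q, of "2*t+2"] by auto
  have "parity_coeff q a (Suc t) * (q^(2*(m+1-t)) - q^(2*m+4))
      = q^((Suc t)^2) * (q^(2*(m+1-t)) - q^(2*m+4)) / (qfac2 q t * (1 - q^(2*t+2)))"
    using par by (simp add: parity_coeff_def qfac2_Suc)
  also have "\<dots> = q^(2*m+3) * (q^(t^2) / qfac2 q t)"
    unfolding key using nz by simp
  finally show ?thesis using True by (simp add: parity_coeff_def)
next
  case False
  hence "Suc t mod 2 \<noteq> a" using a by presburger
  thus ?thesis using False by (simp add: parity_coeff_def)
qed

lemma parity_sum_recurrence:
  assumes q: "norm q < 1" and a: "a \<le> 1"
  shows "(1 - q^(2*m+4)) * parity_sum q a (m+2) - (1+q) * parity_sum q a (m+1) + q * parity_sum q a m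
         = q^(2*m+3) * parity_sum q (1-a) (m+1)"
proof -
  let ?c = "parity_coeff q a"
  have "(1 - q^(2*m+4)) * parity_sum q a (m+2) - (1+q) * parity_sum q a (m+1) + q * parity_sum q a m
      = (\<Sum>s=0..m+2. ?c s * ((1 - q^(2*m+4)) * inv_qfac q (int (m+2) - int s)
          - (1+q) * inv_qfac q (int (m+1) - int s) + q * inv_qfac q (int m - int s)))"
  proof -
    have "parity_sum q a m' = (\<Sum>s=0..m+2. ?c s * inv_qfac q (int m' - int s))" if "m' \<le> m+2" for m'
      using parity_sum_upto[OF that] .
    from this[of m] this[of "m+1"] this[of "m+2"] show ?thesis
      by (simp only: sum_distrib_left sum_subtractf[symmetric] sum.distrib[symmetric] order.refl le_add1
          add_le_mono1 le_SucI) (rule sum.cong, simp_all add: algebra_simps)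
  qed
  also have "\<dots> = (\<Sum>s=0..m+2. ?c s * ((q^(2*(m+2-s)) - q^(2*m+4)) * inv_qfac q (int (m+2-s))))"
  proof (rule sum.cong[OF refl])
    fix s assume "s \<in> {0..m+2}"
    hence "int (m+2-s) = int (m+2) - int s" "int (m+2-s) - 1 = int (m+1) - int s"
      "int (m+2-s) - 2 = int m - int s" by auto
    thus "?c s * ((1 - q^(2*m+4)) * inv_qfac q (int (m+2) - int s) - (1+q) * inv_qfac q (int (m+1) - int s)
            + q * inv_qfac q (int m - int s)) = ?c s * ((q^(2*(m+2-s)) - q^(2*m+4)) * inv_qfac q (int (m+2-s)))"
      using inv_qfac_second_difference[OF q, of "m+2-s"] by (simp add: algebra_simps)
  qed
  also have "\<dots> = (\<Sum>t=0..m+1. ?c (Suc t) * (q^(2*(m+1-t)) - q^(2*m+4)) * inv_qfac q (int (m+1-t)))"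
  proof -
    have "{0..m+2} = {0..Suc (m+1)}" "2*(m+2-0) = 2*m+4" by simp_all
    thus ?thesis by (simp only: sum.atLeast0_atMost_Suc_shift) (simp add: mult.assoc)
  qed
  also have "\<dots> = (\<Sum>t=0..m+1. q^(2*m+3) * (parity_coeff q (1-a) t * inv_qfac q (int (m+1) - int t)))"
  proof (rule sum.cong[OF refl])
    fix t assume "t \<in> {0..m+1}"
    hence t: "t \<le> m+1" and "int (m+1-t) = int (m+1) - int t" by auto
    thus "?c (Suc t) * (q^(2*(m+1-t)) - q^(2*m+4)) * inv_qfac q (int (m+1-t))
        = q^(2*m+3) * (parity_coeff q (1-a) t * inv_qfac q (int (m+1) - int t))"
      unfolding parity_coeff_Suc[OF q a t] by simp
  qed
  also have "\<dots> = q^(2*m+3) * parity_sum q (1-a) (m+1)"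
    unfolding parity_sum_def sum_distrib_left ..
  finally show ?thesis .
qed

lemma Lsum_recurrence:
  assumes q: "norm q < 1" and a: "a \<le> 1"
  shows "Lsum q a (m+2) = (1+q) * Lsum q a (m+1) - q * (1 - q^(2*m+2)) * Lsum q a m
           + q^(2*m+3) * Lsum q (1-a) (m+1)"
proof -
  have g1: "qfac2 q (m+1) = qfac2 q m * (1 - q^(2*m+2))"
    using qfac2_Suc[of q m] by simp
  have "2*(m+1)+2 = 2*m+4" "Suc (m+1) = m+2" by simp_all
  hence g2: "qfac2 q (m+2) = qfac2 q (m+1) * (1 - q^(2*m+4))"
    using qfac2_Suc[of q "m+1"] by metis
  have "Lsum q a (m+2) = qfac2 q (m+1) * ((1 - q^(2*m+4)) * parity_sum q a (m+2))"
    unfolding Lsum_def g2 by simp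
  also have "(1 - q^(2*m+4)) * parity_sum q a (m+2)
      = (1+q) * parity_sum q a (m+1) - q * parity_sum q a m + q^(2*m+3) * parity_sum q (1-a) (m+1)"
    using parity_sum_recurrence[OF q a, of m] by (simp add: algebra_simps)
  finally show ?thesis unfolding Lsum_def g1 by (simp add: algebra_simps)
qed

definition R :: "complex \<Rightarrow> nat \<Rightarrow> nat \<Rightarrow> complex" where
  "R q a m = (if a = 0 then R0 q (int m) else R1 q (int m))"

lemma R_recurrence:
  assumes q: "norm q < 1" "q \<noteq> 0" and a: "a \<le> 1"
  shows "R q a (m+2) = (1+q) * R q a (m+1) - q * (1 - q^(2*m+2)) * R q a m
           + q^(2*m+3) * R q (1-a) (m+1)"
proof -
  define M where "M = int m"
  have M: "M \<ge> 0" "M + 1 \<ge> 0" by (simp_all add: M_def)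
  have idx: "int (m+1) = M + 1" "int (m+2) = M + 1 + 1" "int m = M" by (simp_all add: M_def)
  have pw: "q powi (2*M+2) = q^(2*m+2)" "q powi (2*M+3) = q^(2*m+3)"
    unfolding M_def by (metis of_nat_add of_nat_mult of_nat_numeral power_int_of_nat)+
  have grow0: "R q b (m+1) = R q b m + Rgap q M" for b
    using R0_odd_eq[OF q M(1)] R1_odd_eq[OF q M(1)] R0_Suc[OF q M(1)] R1_Suc[OF q M(1)]
    by (simp add: R_def idx ac_simps)
  have grow1: "R q a (m+2) = R q a (m+1) + Rgap q (M+1)"
    using R0_odd_eq[OF q M(2)] R1_odd_eq[OF q M(2)] R0_Suc[OF q M(2)] R1_Suc[OF q M(2)]
    by (simp add: R_def idx ac_simps)
  have gap: "Rgap q (M+1)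
      = q * (1 - q^(2*m+2)) * Rgap q M + q^(2*m+3) * (R q a (m+1) + R q (1-a) (m+1))"
    using Rgap_Suc[OF q M(1)] a unfolding pw by (cases a) (auto simp: R_def idx ac_simps)
  have "q * q^(2*m+2) = q^(2*m+3)"
    by (metis add.commute add_Suc_right numeral_2_eq_2 numeral_3_eq_3 power_Suc)
  thus ?thesis unfolding grow1 gap using grow0[of a] by (simp add: algebra_simps)
qed

lemma qbinom_2_1:
  assumes "norm q < 1"
  shows "qbinom q 2 1 = 1 + q"
proof -
  have "1 - q \<noteq> 0" using one_minus_power_nonzero[OF assms, of 1] by simp
  moreover have "qbinom q 2 1 = (1 - q) * (1 - q^2) / ((1 - q) * (1 - q))"
    by (simp add: qbinom_def qpoch_def numeral_2_eq_2)
  moreover have "1 - q^2 = (1 - q) * (1 + q)" by (simp add: power2_eq_square algebra_simps)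
  ultimately show ?thesis by simp
qed

lemma R_initial:
  assumes q: "norm q < 1"
  shows "R q 0 0 = 1" "R q 1 0 = 0" "R q 0 1 = 1 + q" "R q 1 1 = q"
proof -
  have "theta_sum q 0 (\<lambda>i. 24*i^2 - 2*i) 0 = 1"
    by (subst theta_sum_single_index[of 0]) (auto simp: qbinom_def)
  moreover have "theta_sum q 0 (\<lambda>i. 24*i^2 + 34*i + 12) 4 = 0"
    "theta_sum q 0 (\<lambda>i. 24*i^2 + 10*i + 1) 1 = 0"
    "theta_sum q 0 (\<lambda>i. 24*i^2 + 22*i + 5) 3 = 0"
    "theta_sum q 2 (\<lambda>i. 24*i^2 + 34*i + 12) 5 = 0"
    "theta_sum q 2 (\<lambda>i. 24*i^2 + 22*i + 5) 4 = 0"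
    by (rule theta_sum_zero_index, presburger)+
  moreover have "theta_sum q 2 (\<lambda>i. 24*i^2 - 2*i) 1 = 1 + q"
    by (subst theta_sum_single_index[of 0]) (presburger, simp add: qbinom_2_1[OF q])
  moreover have "theta_sum q 2 (\<lambda>i. 24*i^2 + 10*i + 1) 2 = q"
    by (subst theta_sum_single_index[of 0]) (presburger, simp add: qbinom_def qfac_nonzero[OF q])
  ultimately show "R q 0 0 = 1" "R q 1 0 = 0" "R q 0 1 = 1 + q" "R q 1 1 = q"
    by (simp_all add: R_def R0_def R1_def)
qed

lemma Lsum_initial:
  assumes q: "norm q < 1"
  shows "Lsum q 0 0 = 1" "Lsum q 1 0 = 0" "Lsum q 0 1 = 1 + q" "Lsum q 1 1 = q"
proof -
  have "1 - q \<noteq> 0" using one_minus_power_nonzero[OF q, of 1] by simp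
  moreover have "qfac2 q 1 = (1 - q) * (1 + q)"
    by (simp add: qfac2_def qpoch_def power2_eq_square algebra_simps)
  moreover have "inv_qfac q 1 = 1 / (1 - q)" by (simp add: inv_qfac_def qpoch_def)
  ultimately show "Lsum q 0 0 = 1" "Lsum q 1 0 = 0" "Lsum q 0 1 = 1 + q" "Lsum q 1 1 = q"
    using qfac2_nonzero[OF q, of 1]
    by (simp_all add: Lsum_def parity_sum_def parity_coeff_def qfac2_def)
qed

text \<open>At q = 0 only the vanishing exponents survive.\<close>

lemma theta_sum_at_0: "(\<And>i. c i \<noteq> 0) \<Longrightarrow> theta_sum 0 n c e = 0"
  by (rule theta_sum_zero) simp

lemma Lsum_eq_R_at_0:
  assumes a: "a \<le> 1"
  shows "Lsum 0 a m = R 0 a m"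
proof -
  have "parity_sum 0 a m = (\<Sum>s=0..m. (if s = 0 \<and> a = 0 then 1 else 0))"
    unfolding parity_sum_def
    by (rule sum.cong) (auto simp: parity_coeff_def qfac2_def qpoch_def inv_qfac_nat)
  hence "Lsum 0 a m = (if a = 0 then 1 else 0)"
    by (simp add: Lsum_def qfac2_def qpoch_def)
  moreover have "theta_sum 0 (2*int m) (\<lambda>i. 24*i^2 - 2*i) (int m) = 1"
  proof (subst theta_sum_single[of 0])
    fix i :: int assume "i \<noteq> 0"
    hence "24*i^2 - 2*i \<noteq> 0" by (simp add: power2_eq_square)
    thus "0 powi (24*i^2 - 2*i) * qbinom 0 (2*int m) (6*i + int m) = 0" by simp
  qed (simp add: qbinom_def qpoch_def)
  moreover have "theta_sum 0 (2*int m) (\<lambda>i. 24*i^2 + 34*i + 12) (int m + 4) = 0"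
  proof (rule theta_sum_at_0)
    fix i :: int
    have "24*i^2 + 34*i + 12 = 2*((3*i+2)*(4*i+3))" by (simp add: algebra_simps power2_eq_square)
    moreover have "3*i+2 \<noteq> 0" "4*i+3 \<noteq> 0" by presburger+
    ultimately show "24*i^2 + 34*i + 12 \<noteq> 0" by simp
  qed
  moreover have "theta_sum 0 (2*int m) (\<lambda>i. 24*i^2 + 10*i + 1) (int m + 1) = 0"
  proof (rule theta_sum_at_0)
    fix i :: int
    have "24*i^2 + 10*i + 1 = (4*i+1)*(6*i+1)" by (simp add: algebra_simps power2_eq_square)
    moreover have "4*i+1 \<noteq> 0" "6*i+1 \<noteq> 0" by presburger+
    ultimately show "24*i^2 + 10*i + 1 \<noteq> 0" by simp
  qed
  moreover have "theta_sum 0 (2*int m) (\<lambda>i. 24*i^2 + 22*i + 5) (int m + 3) = 0"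
  proof (rule theta_sum_at_0)
    fix i :: int
    have "24*i^2 + 22*i + 5 = (2*i+1)*(12*i+5)" by (simp add: algebra_simps power2_eq_square)
    moreover have "2*i+1 \<noteq> 0" "12*i+5 \<noteq> 0" by presburger+
    ultimately show "24*i^2 + 22*i + 5 \<noteq> 0" by simp
  qed
  ultimately show ?thesis using a by (auto simp: R_def R0_def R1_def)
qed

lemma Lsum_eq_R:
  assumes q: "norm q < 1" and a: "a \<le> 1"
  shows "Lsum q a m = R q a m"
proof (cases "q = 0")
  case True
  thus ?thesis using Lsum_eq_R_at_0[OF a] by simp
next
  case False
  have "\<forall>b\<le>1. Lsum q b m = R q b m"
  proof (induction m rule: induct_nat_012)
    case 0 thus ?case using Lsum_initial[OF q] R_initial[OF q] by (auto simp: le_Suc_eq)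
  next
    case 1 thus ?case using Lsum_initial[OF q] R_initial[OF q] by (auto simp: le_Suc_eq)
  next
    case (ge2 n)
    show ?case
    proof (intro allI impI)
      fix b :: nat assume b: "b \<le> 1"
      have "1 - b \<le> 1" by simp
      thus "Lsum q b (Suc (Suc n)) = R q b (Suc (Suc n))"
        using Lsum_recurrence[OF q b, of n] R_recurrence[OF q False b, of n] ge2.IH b
        by (simp add: add_2_eq_Suc')
    qed
  qed
  thus ?thesis using a by blast
qed

definition durfee_term :: "complex \<Rightarrow> nat \<Rightarrow> nat \<Rightarrow> nat \<Rightarrow> complex" where
  "durfee_term q p L i =
     q^(i^2 + i*L) * inv_qfac q (int i) * inv_qfac q (int p - int i) * inv_qfac q (int (i + L))"

text \<open>Pascal's rule in the first two factors splits a term of level p+1 into a shifted part and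
  a term of level p with L+1 in place of L.\<close>

lemma durfee_term_split:
  assumes q: "norm q < 1"
  shows "(1 - q^Suc p) * durfee_term q (Suc p) L i
       = q^(i^2 + i*L) * inv_qfac q (int i - 1) * inv_qfac q (int (Suc p) - int i) * inv_qfac q (int (i + L))
         + (1 - q^(i + L + 1)) * durfee_term q p (Suc L) i"
proof -
  have up: "inv_qfac q (int (i + L)) = (1 - q^(i + L + 1)) * inv_qfac q (int (i + Suc L))"
    using inv_qfac_Suc[OF q, of "i + L"] by simp
  have pw: "q^(i^2 + i*Suc L) = q^(i^2 + i*L) * q^i"
    by (simp add: power_add[symmetric] algebra_simps)
  have "(1 - q^Suc p) * durfee_term q (Suc p) L i
      = q^(i^2 + i*L) * inv_qfac q (int (i + L))
        * ((1 - q^Suc p) * (inv_qfac q (int i) * inv_qfac q (int (Suc p) - int i)))"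
    by (simp add: durfee_term_def algebra_simps)
  also have "\<dots> = q^(i^2 + i*L) * inv_qfac q (int (i + L))
        * (inv_qfac q (int i - 1) * inv_qfac q (int (Suc p) - int i))
      + q^(i^2 + i*L) * q^i * inv_qfac q (int i) * inv_qfac q (int p - int i) * inv_qfac q (int (i + L))"
    unfolding inv_qfac_pascal[OF q] by (simp add: algebra_simps)
  also have "q^(i^2 + i*L) * q^i * inv_qfac q (int i) * inv_qfac q (int p - int i) * inv_qfac q (int (i + L))
      = (1 - q^(i + L + 1)) * durfee_term q p (Suc L) i"
    unfolding durfee_term_def up pw[symmetric] by (simp add: algebra_simps)
  finally show ?thesis by (simp add: algebra_simps)
qed

lemma durfee_identity:
  assumes q: "norm q < 1"
  shows "(\<Sum>i=0..p. durfee_term q p L i) = inv_qfac q (int p) * inv_qfac q (int (p + L))"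
proof (induction p arbitrary: L)
  case 0 thus ?case by (simp add: durfee_term_def)
next
  case (Suc p)
  define U where "U i = q^(i^2 + i*L) * inv_qfac q (int i - 1) * inv_qfac q (int (Suc p) - int i)
    * inv_qfac q (int (i + L))" for i
  define T where "T = durfee_term q p (Suc L)"
  have U_Suc: "U (Suc i) = q^(i + L + 1) * T i" for i
  proof -
    have "(Suc i)^2 + Suc i * L = (i^2 + i * Suc L) + (i + L + 1)"
      by (simp add: power2_eq_square algebra_simps)
    thus ?thesis by (simp add: U_def T_def durfee_term_def power_add algebra_simps)
  qed
  have T_top: "T (Suc p) = 0" by (simp add: T_def durfee_term_def inv_qfac_neg)
  have "(1 - q^Suc p) * (\<Sum>i=0..Suc p. durfee_term q (Suc p) L i)
      = (\<Sum>i=0..Suc p. U i + (1 - q^(i + L + 1)) * T i)"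
    unfolding sum_distrib_left by (rule sum.cong[OF refl]) (simp only: durfee_term_split[OF q] U_def T_def)
  also have "\<dots> = (\<Sum>i=0..Suc p. U i) + (\<Sum>i=0..Suc p. (1 - q^(i + L + 1)) * T i)"
    by (rule sum.distrib)
  also have "(\<Sum>i=0..Suc p. U i) = (\<Sum>i=0..p. q^(i + L + 1) * T i)"
  proof -
    have "U 0 = 0" by (simp add: U_def inv_qfac_neg)
    hence "(\<Sum>i=0..Suc p. U i) = (\<Sum>i=0..p. U (Suc i))"
      by (simp only: sum.atLeast0_atMost_Suc_shift) simp
    thus ?thesis by (simp only: U_Suc)
  qed
  also have "(\<Sum>i=0..Suc p. (1 - q^(i + L + 1)) * T i) = (\<Sum>i=0..p. (1 - q^(i + L + 1)) * T i)"
    by (simp add: T_top)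
  also have "(\<Sum>i=0..p. q^(i + L + 1) * T i) + (\<Sum>i=0..p. (1 - q^(i + L + 1)) * T i)
      = (\<Sum>i=0..p. T i)"
    by (simp add: sum.distrib[symmetric] algebra_simps)
  also have "\<dots> = inv_qfac q (int p) * inv_qfac q (int (Suc p + L))"
    unfolding T_def Suc.IH by simp
  also have "\<dots> = (1 - q^Suc p) * (inv_qfac q (int (Suc p)) * inv_qfac q (int (Suc p + L)))"
    by (simp add: inv_qfac_Suc[OF q, of p] del: of_nat_Suc)
  finally show ?case
    using one_minus_power_nonzero[OF q, of "Suc p"] by simp
qed

definition hpair :: "complex \<Rightarrow> nat \<Rightarrow> int \<Rightarrow> complex" where
  "hpair q X r = inv_qfac q (int X - r) * inv_qfac q (int X + r)"

lemma hpair_abs: "hpair q X r = hpair q X \<bar>r\<bar>"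
  by (cases "r \<ge> 0") (auto simp: hpair_def)

lemma hpair_zero: "int X < \<bar>r\<bar> \<Longrightarrow> hpair q X r = 0"
  by (cases "r \<ge> 0") (auto simp: hpair_def inv_qfac_neg)

lemma qfac_times_hpair: "qpoch q q (2*X) * hpair q X r = qbinom q (2*int X) (int X - r)"
proof -
  have "nat (2 * int X) = 2 * X" "2 * int X - (int X - r) = int X + r" by simp_all
  thus ?thesis by (simp add: qbinom_inv_qfac hpair_def)
qed

text \<open>The Bailey lemma for these pairs: the step beta_X |-> sum_N q^(N^2) beta_N / (q)_(X-N)
  multiplies hpair by q^(r^2).  It is the Durfee identity with L = 2r, shifted by r.\<close>

lemma bailey_step_nat:
  assumes q: "norm q < 1"
  shows "(\<Sum>N=0..X. q^(N^2) * inv_qfac q (int X - int N) * hpair q N (int u)) = q^(u^2) * hpair q X (int u)"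
proof (cases "X < u")
  case True
  have "(\<Sum>N=0..X. q^(N^2) * inv_qfac q (int X - int N) * hpair q N (int u)) = 0"
    by (rule sum.neutral) (use True in \<open>auto simp: hpair_zero\<close>)
  thus ?thesis using True by (simp add: hpair_zero)
next
  case False
  then obtain p where X: "X = u + p" by (metis le_Suc_ex linorder_not_le)
  let ?f = "\<lambda>N. q^(N^2) * inv_qfac q (int X - int N) * hpair q N (int u)"
  have "(\<Sum>N=0..X. ?f N) = (\<Sum>N=u..u+p. ?f N)"
    by (rule sum.mono_neutral_right) (auto simp: X hpair_zero)
  also have "\<dots> = (\<Sum>i=0..p. ?f (i + u))"
    using sum.shift_bounds_cl_nat_ivl[of ?f 0 u p] by (simp add: add.commute)
  also have "\<dots> = q^(u^2) * (\<Sum>i=0..p. durfee_term q p (2*u) i)"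
    unfolding sum_distrib_left
  proof (rule sum.cong[OF refl])
    fix i
    have "(i+u)^2 = u^2 + (i^2+i*(2*u))" by (simp add: power2_eq_square algebra_simps)
    moreover have "int X - int (i+u) = int p - int i" "int (i+u) - int u = int i"
      "int (i+u) + int u = int (i + 2*u)" using X by auto
    ultimately show "?f (i + u) = q^(u^2) * durfee_term q p (2*u) i"
      by (simp add: hpair_def durfee_term_def power_add algebra_simps)
  qed
  also have "\<dots> = q^(u^2) * hpair q X (int u)"
  proof -
    have "int X - int u = int p" "int X + int u = int (p + 2*u)" using X by auto
    thus ?thesis unfolding durfee_identity[OF q] hpair_def by (simp only:)
  qed
  finally show ?thesis .
qed

lemma bailey_step:
  assumes q: "norm q < 1"
  shows "(\<Sum>N=0..X. q^(N^2) * inv_qfac q (int X - int N) * hpair q N r) = q powi (r^2) * hpair q X r"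
proof -
  have "hpair q N r = hpair q N (int (nat \<bar>r\<bar>))" for N using hpair_abs[of q N r] by simp
  moreover have "r^2 = int (nat \<bar>r\<bar> ^ 2)" by simp
  hence "q powi (r^2) = q ^ (nat \<bar>r\<bar> ^ 2)" by (simp only: power_int_of_nat)
  ultimately show ?thesis using bailey_step_nat[OF q, of X "nat \<bar>r\<bar>"] by simp
qed

text \<open>The exponents of the theorem, written with a itself in place of delta_(a,1).\<close>

definition expA :: "nat \<Rightarrow> nat \<Rightarrow> int \<Rightarrow> int" where
  "expA k a j = 12*(2+3*int k)*j^2 + 2*j*(1 - 6*int a*(1+int k)) + (1+int k)*int a"

definition expB :: "nat \<Rightarrow> nat \<Rightarrow> int \<Rightarrow> int" where
  "expB k a j = 12*(2+3*int k)*j^2 + 2*j*(-7 - 12*int k - 6*int a*(1+int k)) + 2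
     + int k*(int a+2)^2 + 5*int a"

text \<open>Each Bailey step adds the square of the shift r of hpair to the exponent.\<close>

lemma expA_Suc: "a \<le> 1 \<Longrightarrow> expA (Suc k) a j = expA k a j + (6*j - int a)^2"
  by (auto simp: expA_def algebra_simps power2_eq_square le_Suc_eq)

lemma expB_Suc: "a \<le> 1 \<Longrightarrow> expB (Suc k) a j = expB k a j + (6*j - int a - 2)^2"
  by (auto simp: expB_def algebra_simps power2_eq_square le_Suc_eq)

lemma mult_nonneg_same_sign: "(0 \<le> (x::int) \<and> 0 \<le> y) \<or> (x \<le> 0 \<and> y \<le> 0) \<Longrightarrow> 0 \<le> x * y"
  by (auto intro: mult_nonneg_nonneg mult_nonpos_nonpos)

lemma expA_nonneg:
  assumes a: "a \<le> 1"
  shows "0 \<le> expA k a j"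
proof (induction k)
  case 0
  have "expA 0 a j = (2*j) * (12*j+1) \<or> expA 0 a j = (4*j-1) * (6*j-1)"
    using a by (auto simp: expA_def algebra_simps power2_eq_square le_Suc_eq)
  moreover have "0 \<le> (2*j) * (12*j+1)" "0 \<le> (4*j-1) * (6*j-1)"
    by (rule mult_nonneg_same_sign, presburger)+
  ultimately show ?case by auto
next
  case (Suc k) thus ?case by (simp add: expA_Suc[OF a])
qed

lemma expB_nonneg:
  assumes a: "a \<le> 1"
  shows "0 \<le> expB k a j"
proof (induction k)
  case 0
  have "expB 0 a j = (2*(3*j-1)) * (4*j-1) \<or> expB 0 a j = (2*j-1) * (12*j-7)"
    using a by (auto simp: expB_def algebra_simps power2_eq_square le_Suc_eq)
  moreover have "0 \<le> (2*(3*j-1)) * (4*j-1)" "0 \<le> (2*j-1) * (12*j-7)"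
    by (rule mult_nonneg_same_sign, presburger)+
  ultimately show ?case by auto
next
  case (Suc k) thus ?case by (simp add: expB_Suc[OF a])
qed

definition beta0 :: "complex \<Rightarrow> nat \<Rightarrow> nat \<Rightarrow> complex" where
  "beta0 q a N = parity_sum q a N / qpoch q (q^2) N"

primrec beta :: "complex \<Rightarrow> nat \<Rightarrow> nat \<Rightarrow> nat \<Rightarrow> complex" where
  "beta q a 0 X = beta0 q a X"
| "beta q a (Suc k) X = (\<Sum>N=0..X. q^(N^2) * inv_qfac q (int X - int N) * beta q a k N)"

lemma qfac_double: "qpoch q q (2*N) = qpoch q (q^2) N * qfac2 q N"
proof (induction N)
  case (Suc N)
  have "2 * Suc N = Suc (Suc (2*N))" by simp
  hence "qpoch q q (2 * Suc N) = qpoch q q (2*N) * (1 - q * q^(2*N)) * (1 - q * q^(Suc (2*N)))"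
    by (simp only: qpoch_Suc)
  hence two: "qpoch q q (2 * Suc N) = qpoch q q (2*N) * (1 - q^(2*N+1)) * (1 - q^(2*N+2))"
    by simp
  have one: "qpoch q (q^2) (Suc N) = qpoch q (q^2) N * (1 - q^(2*N+1))"
    by (simp add: qpoch_Suc power_mult)
  show ?case unfolding two one qfac2_Suc Suc.IH by (simp add: algebra_simps)
qed (simp add: qfac2_def)

lemma qfac_times_beta0:
  assumes q: "norm q < 1"
  shows "qpoch q q (2*N) * beta0 q a N = Lsum q a N"
  using qpoch_q_q2_nonzero[OF q, of N] by (simp add: qfac_double beta0_def Lsum_def)

lemma R_as_theta_series:
  assumes a: "a \<le> 1"
  shows "R q a N = (\<Sum>\<^sub>\<infinity>j. q powi (expA 0 a j) * qbinom q (2*int N) (int N - (6*j - int a)))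
     - (\<Sum>\<^sub>\<infinity>j. q powi (expB 0 a j) * qbinom q (2*int N) (int N - (6*j - int a - 2)))"
proof -
  have reflected: "theta_sum q (2*int N) c (int N + int a)
      = (\<Sum>\<^sub>\<infinity>j. q powi (c (-j)) * qbinom q (2*int N) (int N - (6*j - int a)))" for c
    unfolding theta_sum_def by (subst infsum_int_reflect) (simp add: algebra_simps)
  have shifted: "theta_sum q (2*int N) c (int N + 4 - int a)
      = (\<Sum>\<^sub>\<infinity>j. q powi (c (j - 1)) * qbinom q (2*int N) (int N - (6*j - int a - 2)))" for c
    unfolding theta_sum_def
  proof (subst infsum_int_shift[where d="-1"], rule infsum_cong)
    fix j :: int
    have "qbinom q (2*int N) (6*(j + -1) + (int N + 4 - int a))
        = qbinom q (2*int N) (2*int N - (6*(j + -1) + (int N + 4 - int a)))"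
      by (rule qbinom_sym)
    thus "q powi (c (j + -1)) * qbinom q (2*int N) (6*(j + -1) + (int N + 4 - int a))
        = q powi (c (j - 1)) * qbinom q (2*int N) (int N - (6*j - int a - 2))"
      by (simp add: algebra_simps)
  qed
  consider "a = 0" | "a = 1" using a by linarith
  thus ?thesis
  proof cases
    case 1
    have "expA 0 a j = 24*(-j)^2 - 2*(-j)" "expB 0 a j = 24*(j-1)^2 + 34*(j-1) + 12" for j
      by (simp_all add: expA_def expB_def 1 algebra_simps power2_eq_square)
    thus ?thesis using reflected[of "\<lambda>i. 24*i^2 - 2*i"] shifted[of "\<lambda>i. 24*i^2 + 34*i + 12"] 1
      by (simp add: R_def R0_def)
  next
    case 2
    have "expA 0 a j = 24*(-j)^2 + 10*(-j) + 1" "expB 0 a j = 24*(j-1)^2 + 22*(j-1) + 5" for j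
      by (simp_all add: expA_def expB_def 2 algebra_simps power2_eq_square)
    thus ?thesis using reflected[of "\<lambda>i. 24*i^2 + 10*i + 1"] shifted[of "\<lambda>i. 24*i^2 + 22*i + 5"] 2
      by (simp add: R_def R1_def add.commute)
  qed
qed

lemma beta0_expansion:
  assumes q: "norm q < 1" and a: "a \<le> 1"
  shows "beta0 q a N = (\<Sum>\<^sub>\<infinity>j. q powi (expA 0 a j) * hpair q N (6*j - int a))
     - (\<Sum>\<^sub>\<infinity>j. q powi (expB 0 a j) * hpair q N (6*j - int a - 2))"
proof -
  define P where "P = qpoch q q (2*N)"
  have "P \<noteq> 0" using qfac_nonzero[OF q] by (simp add: P_def)
  moreover have "P * beta0 q a N = P * ((\<Sum>\<^sub>\<infinity>j. q powi (expA 0 a j) * hpair q N (6*j - int a))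
     - (\<Sum>\<^sub>\<infinity>j. q powi (expB 0 a j) * hpair q N (6*j - int a - 2)))"
    unfolding P_def qfac_times_beta0[OF q] Lsum_eq_R[OF q a] R_as_theta_series[OF a]
      right_diff_distrib infsum_cmult_right'[symmetric]
    by (simp add: mult.left_commute[of "qpoch q q (2*N)"] qfac_times_hpair)
  ultimately show ?thesis by simp
qed

text \<open>For N <= X only the indices |j| <= X+1 contribute, uniformly in N; this allows the finite
  Bailey sum to be interchanged with the sum over j.\<close>

definition window :: "nat \<Rightarrow> int set" where
  "window X = {-(int X+1)..int X+1}"

lemma hpair_outside_window:
  assumes "N \<le> X" "0 \<le> c" "c \<le> 3" "j \<notin> window X"
  shows "hpair q N (6*j - c) = 0"
proof (rule hpair_zero)
  from assms(4) have "j \<ge> int X + 2 \<or> j \<le> -(int X) - 2" by (auto simp: window_def)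
  thus "int N < \<bar>6*j - c\<bar>" using assms(1-3) by auto
qed

lemma infsum_hpair_window:
  assumes "N \<le> X" "0 \<le> c" "c \<le> 3"
  shows "(\<Sum>\<^sub>\<infinity>j. f j * hpair q N (6*j - c)) = (\<Sum>j\<in>window X. f j * hpair q N (6*j - c))"
  by (rule infsum_finite_support) (auto simp: window_def hpair_outside_window[OF assms])

lemma beta_expansion:
  assumes q: "norm q < 1" and a: "a \<le> 1"
  shows "beta q a k X = (\<Sum>\<^sub>\<infinity>j. q powi (expA k a j) * hpair q X (6*j - int a))
     - (\<Sum>\<^sub>\<infinity>j. q powi (expB k a j) * hpair q X (6*j - int a - 2))"
proof (induction k arbitrary: X)
  case 0 thus ?case using beta0_expansion[OF q a] by simp
next
  case (Suc k)
  have c: "0 \<le> int a" "int a \<le> 3" "0 \<le> int a + 2" "int a + 2 \<le> 3" using a by auto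
  have shift2: "6*j - int a - 2 = 6*j - (int a + 2)" for j :: int by simp
  note window = infsum_hpair_window[OF _ c(1,2)] infsum_hpair_window[OF _ c(3,4)]
  have IH: "beta q a k N = (\<Sum>j\<in>window X. q powi (expA k a j) * hpair q N (6*j - int a))
     - (\<Sum>j\<in>window X. q powi (expB k a j) * hpair q N (6*j - int a - 2))" if "N \<le> X" for N
    unfolding Suc.IH shift2 window[OF that] ..
  have step: "(\<Sum>N=0..X. q^(N^2) * inv_qfac q (int X - int N) * (q powi e * hpair q N r))
        = q powi (e + r^2) * hpair q X r" if "0 \<le> e" for e r
  proof -
    have "(\<Sum>N=0..X. q^(N^2) * inv_qfac q (int X - int N) * (q powi e * hpair q N r))
        = q powi e * (\<Sum>N=0..X. q^(N^2) * inv_qfac q (int X - int N) * hpair q N r)"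
      by (simp add: sum_distrib_left algebra_simps)
    also have "\<dots> = q powi e * q powi (r^2) * hpair q X r" by (simp add: bailey_step[OF q])
    also have "q powi e * q powi (r^2) = q powi (e + r^2)"
    proof (cases "e + r^2 = 0")
      case True
      hence "e = 0" "r^2 = 0" using that add_nonneg_eq_0_iff[of e "r^2"] by simp_all
      thus ?thesis by simp
    qed (simp add: power_int_add)
    finally show ?thesis .
  qed
  have "beta q a (Suc k) X
      = (\<Sum>j\<in>window X. \<Sum>N=0..X. q^(N^2) * inv_qfac q (int X - int N)
            * (q powi (expA k a j) * hpair q N (6*j - int a)))
      - (\<Sum>j\<in>window X. \<Sum>N=0..X. q^(N^2) * inv_qfac q (int X - int N)
            * (q powi (expB k a j) * hpair q N (6*j - int a - 2)))"
    by (simp add: IH right_diff_distrib sum_subtractf sum_distrib_left sum.swap[of _ "{0..X}"])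
  also have "\<dots> = (\<Sum>j\<in>window X. q powi (expA (Suc k) a j) * hpair q X (6*j - int a))
     - (\<Sum>j\<in>window X. q powi (expB (Suc k) a j) * hpair q X (6*j - int a - 2))"
    by (simp add: step expA_nonneg[OF a] expB_nonneg[OF a] expA_Suc[OF a] expB_Suc[OF a])
  also have "\<dots> = (\<Sum>\<^sub>\<infinity>j. q powi (expA (Suc k) a j) * hpair q X (6*j - int a))
     - (\<Sum>\<^sub>\<infinity>j. q powi (expB (Suc k) a j) * hpair q X (6*j - int a - 2))"
    unfolding shift2 window[OF order_refl] ..
  finally show ?case .
qed

text \<open>Since 1/(q)_(X-N_1)
  vanishes for N_1 > X, the sum may be restricted to the finite set of sequences bounded by X.\<close>

definition index_set :: "nat \<Rightarrow> nat \<Rightarrow> (nat \<Rightarrow> nat) set" where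
  "index_set k a = {n. (\<forall>i. i \<notin> {1..k+1} \<longrightarrow> n i = 0) \<and> n (k+1) mod 2 = a}"

definition bounded_index_set :: "nat \<Rightarrow> nat \<Rightarrow> nat \<Rightarrow> (nat \<Rightarrow> nat) set" where
  "bounded_index_set k a X = {n \<in> index_set k a. \<forall>i. n i \<le> X}"

definition tail_sum :: "nat \<Rightarrow> (nat \<Rightarrow> nat) \<Rightarrow> nat \<Rightarrow> nat" where
  "tail_sum k n i = (\<Sum>j=i..k+1. n j)"

definition weight :: "complex \<Rightarrow> nat \<Rightarrow> (nat \<Rightarrow> nat) \<Rightarrow> complex" where
  "weight q k n = q^(\<Sum>i=1..k+1. (tail_sum k n i)^2)
     / ((\<Prod>i=1..k. qpoch q q (n i)) * qpoch (q^2) (q^2) (n (k+1)) * qpoch q (q^2) (n k + n (k+1)))"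

definition multisum :: "complex \<Rightarrow> nat \<Rightarrow> nat \<Rightarrow> nat \<Rightarrow> complex" where
  "multisum q k a X =
     (\<Sum>n\<in>bounded_index_set k a X. inv_qfac q (int X - int (tail_sum k n 1)) * weight q k n)"

lemma bounded_index_set_finite: "finite (bounded_index_set k a X)"
proof -
  let ?F = "{f. \<forall>x. (x \<in> {1..k+1} \<longrightarrow> f x \<in> {0..X}) \<and> (x \<notin> {1..k+1} \<longrightarrow> f x = (0::nat))}"
  have "bounded_index_set k a X \<subseteq> ?F"
    by (auto simp: bounded_index_set_def index_set_def)
  moreover have "finite ?F" by (rule finite_set_of_finite_funs) auto
  ultimately show ?thesis by (rule finite_subset)
qed

lemma bounded_index_set_mono: "N \<le> X \<Longrightarrow> bounded_index_set k a N \<subseteq> bounded_index_set k a X"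
  by (auto simp: bounded_index_set_def intro: le_trans)

lemma inv_qfac_outside_bounded:
  assumes "n \<in> index_set k a" "n \<notin> bounded_index_set k a X"
  shows "inv_qfac q (int X - int (tail_sum k n 1)) = 0"
proof -
  from assms obtain i where i: "n i > X" by (auto simp: bounded_index_set_def not_le)
  with assms(1) have "i \<in> {1..k+1}" by (auto simp: index_set_def)
  hence "n i \<le> tail_sum k n 1" unfolding tail_sum_def by (intro member_le_sum) auto
  thus ?thesis using i by (simp add: inv_qfac_neg)
qed

definition cons_seq :: "nat \<Rightarrow> (nat \<Rightarrow> nat) \<Rightarrow> (nat \<Rightarrow> nat)" where
  "cons_seq n1 n' = (\<lambda>i. if i = 0 then 0 else if i = 1 then n1 else n' (i - 1))"

definition tail_seq :: "(nat \<Rightarrow> nat) \<Rightarrow> (nat \<Rightarrow> nat)" where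
  "tail_seq n = (\<lambda>i. if i = 0 then 0 else n (i+1))"

lemma cons_seq_in_bounded:
  assumes k: "k \<ge> 1" and n': "n' \<in> bounded_index_set k a X" and n1: "n1 \<le> X"
  shows "cons_seq n1 n' \<in> bounded_index_set (k+1) a X"
proof -
  have z: "\<forall>i. i \<notin> {1..k+1} \<longrightarrow> n' i = 0" "n' (k+1) mod 2 = a" "\<forall>i. n' i \<le> X"
    using n' by (auto simp: bounded_index_set_def index_set_def)
  have "cons_seq n1 n' i = 0" if "i \<notin> {1..k+1+1}" for i
  proof (cases "i = 0")
    case False
    hence "i - 1 \<notin> {1..k+1}" "i \<noteq> 1" using that k by auto
    thus ?thesis using z(1) False by (simp add: cons_seq_def)
  qed (simp add: cons_seq_def)
  moreover have "cons_seq n1 n' (k+1+1) mod 2 = a" using z(2) by (simp add: cons_seq_def)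
  moreover have "cons_seq n1 n' i \<le> X" for i using z(3) n1 by (simp add: cons_seq_def)
  ultimately show ?thesis by (simp add: bounded_index_set_def index_set_def)
qed

lemma cons_seq_bij:
  assumes k: "k \<ge> 1"
  shows "bij_betw (\<lambda>(n1, n'). cons_seq n1 n') ({0..X} \<times> bounded_index_set k a X)
           (bounded_index_set (k+1) a X)"
proof (rule bij_betwI[where g="\<lambda>n. (n 1, tail_seq n)"])
  show "(\<lambda>(n1, n'). cons_seq n1 n') \<in> {0..X} \<times> bounded_index_set k a X \<rightarrow> bounded_index_set (k+1) a X"
    using cons_seq_in_bounded[OF k] by auto
  show "(\<lambda>n. (n 1, tail_seq n)) \<in> bounded_index_set (k+1) a X \<rightarrow> {0..X} \<times> bounded_index_set k a X"
    using k by (auto simp: bounded_index_set_def index_set_def tail_seq_def)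
  show "(\<lambda>n. (n 1, tail_seq n)) ((\<lambda>(n1, n'). cons_seq n1 n') p) = p"
    if "p \<in> {0..X} \<times> bounded_index_set k a X" for p
    using that by (auto simp: bounded_index_set_def index_set_def tail_seq_def cons_seq_def)
  show "(\<lambda>(n1, n'). cons_seq n1 n') (n 1, tail_seq n) = n" if "n \<in> bounded_index_set (k+1) a X" for n
  proof -
    have "n 0 = 0" using that by (auto simp: bounded_index_set_def index_set_def)
    thus ?thesis by (auto simp: cons_seq_def tail_seq_def)
  qed
qed

lemma tail_sum_cons_Suc:
  assumes "i \<ge> 1"
  shows "tail_sum (Suc k) (cons_seq n1 n') (Suc i) = tail_sum k n' i"
proof -
  have "tail_sum (k+1) (cons_seq n1 n') (Suc i) = (\<Sum>j=i+1..(k+1)+1. cons_seq n1 n' j)"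
    by (simp add: tail_sum_def)
  also have "\<dots> = (\<Sum>j=i..k+1. cons_seq n1 n' (j+1))" by (rule sum.shift_bounds_cl_nat_ivl)
  also have "\<dots> = (\<Sum>j=i..k+1. n' j)" by (rule sum.cong) (use assms in \<open>auto simp: cons_seq_def\<close>)
  finally show ?thesis by (simp add: tail_sum_def)
qed

lemma tail_sum_cons_1: "tail_sum (k+1) (cons_seq n1 n') 1 = n1 + tail_sum k n' 1"
proof -
  have "tail_sum (k+1) (cons_seq n1 n') 1 = cons_seq n1 n' 1 + tail_sum (k+1) (cons_seq n1 n') (Suc 1)"
    unfolding tail_sum_def by (subst sum.atLeast_Suc_atMost) auto
  thus ?thesis using tail_sum_cons_Suc[of 1 k n1 n'] by (simp add: cons_seq_def)
qed

lemma weight_cons: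
  assumes k: "k \<ge> 1"
  shows "weight q (k+1) (cons_seq n1 n') = q^((n1 + tail_sum k n' 1)^2) * inv_qfac q (int n1) * weight q k n'"
proof -
  have squares: "(\<Sum>i=1..k+2. (tail_sum (k+1) (cons_seq n1 n') i)^2)
      = (n1 + tail_sum k n' 1)^2 + (\<Sum>i=1..k+1. (tail_sum k n' i)^2)"
  proof -
    have "(\<Sum>i=1..k+2. (tail_sum (k+1) (cons_seq n1 n') i)^2)
        = (tail_sum (k+1) (cons_seq n1 n') 1)^2 + (\<Sum>i=Suc 1..k+2. (tail_sum (k+1) (cons_seq n1 n') i)^2)"
      by (subst sum.atLeast_Suc_atMost) auto
    also have "(\<Sum>i=Suc 1..k+2. (tail_sum (k+1) (cons_seq n1 n') i)^2)
        = (\<Sum>i=1..k+1. (tail_sum (k+1) (cons_seq n1 n') (i+1))^2)"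
      using sum.shift_bounds_cl_nat_ivl[of "\<lambda>i. (tail_sum (k+1) (cons_seq n1 n') i)^2" 1 1 "k+1"] by simp
    also have "\<dots> = (\<Sum>i=1..k+1. (tail_sum k n' i)^2)"
      by (rule sum.cong) (auto simp: tail_sum_cons_Suc)
    finally show ?thesis using tail_sum_cons_1[of k n1 n'] by simp
  qed
  have prods: "(\<Prod>i=1..k+1. qpoch q q (cons_seq n1 n' i)) = qpoch q q n1 * (\<Prod>i=1..k. qpoch q q (n' i))"
  proof -
    have "(\<Prod>i=1..k+1. qpoch q q (cons_seq n1 n' i))
        = qpoch q q n1 * (\<Prod>i=Suc 1..k+1. qpoch q q (cons_seq n1 n' i))"
      by (subst prod.atLeast_Suc_atMost) (auto simp: cons_seq_def)
    also have "(\<Prod>i=Suc 1..k+1. qpoch q q (cons_seq n1 n' i)) = (\<Prod>i=1..k. qpoch q q (n' i))"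
      using prod.shift_bounds_cl_nat_ivl[of "\<lambda>i. qpoch q q (cons_seq n1 n' i)" 1 1 k]
      by (simp add: cons_seq_def)
    finally show ?thesis .
  qed
  have "cons_seq n1 n' (k+1+1) = n' (k+1)" "cons_seq n1 n' (k+1) = n' k"
    using k by (auto simp: cons_seq_def)
  thus ?thesis using squares prods
    by (simp add: weight_def inv_qfac_nat power_add add.commute[of k 1])
qed

lemma sum_shift_inv_qfac:
  assumes g: "\<And>N. N > X \<Longrightarrow> g N = 0"
  shows "(\<Sum>N=0..X. inv_qfac q (int N - int s) * g N) = (\<Sum>n=0..X. inv_qfac q (int n) * g (n + s))"
proof -
  have "(\<Sum>n=0..X. inv_qfac q (int n) * g (n + s))
      = (\<Sum>N\<in>(\<lambda>n. n + s) ` {0..X}. inv_qfac q (int N - int s) * g N)"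
    by (subst sum.reindex) (auto simp: inj_on_def)
  also have "(\<lambda>n. n + s) ` {0..X} = {s..X+s}" by (auto simp: image_iff)
  also have "(\<Sum>N\<in>{s..X+s}. inv_qfac q (int N - int s) * g N)
      = (\<Sum>N\<in>{s..X}. inv_qfac q (int N - int s) * g N)"
    by (rule sum.mono_neutral_right) (auto simp: g)
  also have "\<dots> = (\<Sum>N=0..X. inv_qfac q (int N - int s) * g N)"
    by (rule sum.mono_neutral_left) (auto simp: inv_qfac_neg)
  finally show ?thesis ..
qed

lemma sum_by_total:
  assumes F: "\<And>r N. N > X \<Longrightarrow> F r N = 0"
  shows "(\<Sum>(n1, r)\<in>{0..X} \<times> A. inv_qfac q (int n1) * F r (n1 + s r))
       = (\<Sum>N=0..X. \<Sum>r\<in>A. inv_qfac q (int N - int (s r)) * F r N)"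
proof -
  have "(\<Sum>(n1, r)\<in>{0..X} \<times> A. inv_qfac q (int n1) * F r (n1 + s r))
      = (\<Sum>r\<in>A. \<Sum>n1=0..X. inv_qfac q (int n1) * F r (n1 + s r))"
    by (simp add: sum.cartesian_product[symmetric] sum.swap[of _ "{0..X}"])
  also have "\<dots> = (\<Sum>r\<in>A. \<Sum>N=0..X. inv_qfac q (int N - int (s r)) * F r N)"
    by (rule sum.cong[OF refl], rule sum_shift_inv_qfac[symmetric]) (rule F)
  finally show ?thesis by (simp add: sum.swap[of _ A])
qed

lemma multisum_Suc:
  assumes q: "norm q < 1" and k: "k \<ge> 1"
  shows "multisum q (k+1) a X = (\<Sum>N=0..X. q^(N^2) * inv_qfac q (int X - int N) * multisum q k a N)"
proof -
  let ?B = "bounded_index_set k a X"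
  define F where "F n' N = q^(N^2) * inv_qfac q (int X - int N) * weight q k n'" for n' N
  have "multisum q (k+1) a X = (\<Sum>(n1, n')\<in>{0..X} \<times> ?B. inv_qfac q (int n1) * F n' (n1 + tail_sum k n' 1))"
    unfolding multisum_def sum.reindex_bij_betw[OF cons_seq_bij[OF k], symmetric]
    by (rule sum.cong) (auto simp: tail_sum_cons_1[simplified] weight_cons[OF k, simplified] F_def algebra_simps)
  also have "\<dots> = (\<Sum>N=0..X. \<Sum>n'\<in>?B. inv_qfac q (int N - int (tail_sum k n' 1)) * F n' N)"
    by (rule sum_by_total) (simp add: F_def inv_qfac_neg)
  also have "\<dots> = (\<Sum>N=0..X. q^(N^2) * inv_qfac q (int X - int N) * multisum q k a N)"
  proof (rule sum.cong[OF refl])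
    fix N assume "N \<in> {0..X}"
    hence NX: "N \<le> X" by simp
    have "inv_qfac q (int N - int (tail_sum k n 1)) = 0" if "n \<in> ?B - bounded_index_set k a N" for n
      using that by (intro inv_qfac_outside_bounded) (auto simp: bounded_index_set_def)
    hence "multisum q k a N = (\<Sum>n'\<in>?B. inv_qfac q (int N - int (tail_sum k n' 1)) * weight q k n')"
      unfolding multisum_def
      by (intro sum.mono_neutral_left[OF bounded_index_set_finite bounded_index_set_mono[OF NX]]) auto
    thus "(\<Sum>n'\<in>?B. inv_qfac q (int N - int (tail_sum k n' 1)) * F n' N)
        = q^(N^2) * inv_qfac q (int X - int N) * multisum q k a N"
      by (simp add: F_def sum_distrib_left algebra_simps)
  qed
  finally show ?thesis .
qed

definition pair_seq :: "nat \<times> nat \<Rightarrow> (nat \<Rightarrow> nat)" where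
  "pair_seq p = (\<lambda>i. if i = 1 then fst p else if i = 2 then snd p else 0)"

definition parity_range :: "nat \<Rightarrow> nat \<Rightarrow> nat set" where
  "parity_range a X = {s \<in> {0..X}. s mod 2 = a}"

lemma parity_sum_range:
  assumes "N \<le> X"
  shows "parity_sum q a N = (\<Sum>s\<in>parity_range a X. q^(s^2) / qfac2 q s * inv_qfac q (int N - int s))"
  unfolding parity_sum_upto[OF assms] parity_range_def sum.inter_filter[OF finite_atLeastAtMost]
  by (rule sum.cong) (auto simp: parity_coeff_def)

lemma pair_seq_bij: "bij_betw pair_seq ({0..X} \<times> parity_range a X) (bounded_index_set 1 a X)"
proof (rule bij_betwI[where g="\<lambda>n. (n 1, n 2)"])
  show "pair_seq \<in> {0..X} \<times> parity_range a X \<rightarrow> bounded_index_set 1 a X"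
    by (auto simp: pair_seq_def parity_range_def bounded_index_set_def index_set_def)
  show "(\<lambda>n. (n 1, n 2)) \<in> bounded_index_set 1 a X \<rightarrow> {0..X} \<times> parity_range a X"
    by (auto simp: parity_range_def bounded_index_set_def index_set_def numeral_2_eq_2)
  show "(pair_seq p 1, pair_seq p 2) = p" for p by (simp add: pair_seq_def)
  show "pair_seq (n 1, n 2) = n" if "n \<in> bounded_index_set 1 a X" for n
  proof
    fix i
    show "pair_seq (n 1, n 2) i = n i"
    proof (cases "i \<in> {1..2}")
      case True hence "i = 1 \<or> i = 2" by auto
      thus ?thesis by (auto simp: pair_seq_def)
    next
      case False thus ?thesis using that by (auto simp: pair_seq_def bounded_index_set_def index_set_def)
    qed
  qed
qed

lemma weight_pair:
  "weight q 1 (pair_seq (n1, s)) = q^((n1+s)^2 + s^2) / (qpoch q q n1 * qfac2 q s * qpoch q (q^2) (n1 + s))"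
proof -
  have "tail_sum 1 (pair_seq (n1, s)) 1 = n1 + s" "tail_sum 1 (pair_seq (n1, s)) 2 = s"
    by (simp_all add: tail_sum_def pair_seq_def numeral_2_eq_2)
  hence "(\<Sum>i=1..1+1. (tail_sum 1 (pair_seq (n1, s)) i)^2) = (n1+s)^2 + s^2"
    by (simp add: numeral_2_eq_2)
  thus ?thesis unfolding weight_def by (simp add: pair_seq_def qfac2_def)
qed

lemma multisum_1:
  assumes q: "norm q < 1"
  shows "multisum q 1 a X = beta q a 1 X"
proof -
  define F where "F s N = q^(N^2) * inv_qfac q (int X - int N) * (q^(s^2) / (qfac2 q s * qpoch q (q^2) N))"
    for s N
  have "multisum q 1 a X = (\<Sum>(n1, s)\<in>{0..X} \<times> parity_range a X. inv_qfac q (int n1) * F s (n1 + s))"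
    unfolding multisum_def sum.reindex_bij_betw[OF pair_seq_bij, symmetric]
  proof (rule sum.cong[OF refl], clarify)
    fix n1 s
    have "tail_sum 1 (pair_seq (n1, s)) 1 = n1 + s"
      by (simp add: tail_sum_def pair_seq_def numeral_2_eq_2)
    thus "inv_qfac q (int X - int (tail_sum 1 (pair_seq (n1, s)) 1)) * weight q 1 (pair_seq (n1, s))
        = inv_qfac q (int n1) * F s (n1 + s)"
      unfolding weight_pair by (simp add: F_def inv_qfac_nat power_add ac_simps)
  qed
  also have "\<dots> = (\<Sum>N=0..X. \<Sum>s\<in>parity_range a X. inv_qfac q (int N - int s) * F s N)"
    by (rule sum_by_total) (simp add: F_def inv_qfac_neg)
  also have "\<dots> = (\<Sum>N=0..X. q^(N^2) * inv_qfac q (int X - int N) * beta0 q a N)"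
    by (rule sum.cong[OF refl])
      (simp add: beta0_def parity_sum_range F_def sum_distrib_left sum_divide_distrib algebra_simps)
  finally show ?thesis by simp
qed

lemma multisum_eq_beta:
  assumes q: "norm q < 1" and k: "k \<ge> 1"
  shows "multisum q k a X = beta q a k X"
  using k
proof (induction k arbitrary: X rule: dec_induct)
  case base thus ?case by (rule multisum_1[OF q])
next
  case (step k)
  have "multisum q (k+1) a X = (\<Sum>N=0..X. q^(N^2) * inv_qfac q (int X - int N) * multisum q k a N)"
    by (rule multisum_Suc[OF q step.hyps(1)])
  thus ?case by (simp add: step.IH)
qed

text \<open>Only the finitely many n with N_1 <= M contribute to the left-hand side.\<close>

lemma infsum_eq_multisum:
  "(\<Sum>\<^sub>\<infinity>n \<in> {n :: nat \<Rightarrow> nat. (\<forall>i. i \<notin> {1..k+1} \<longrightarrow> n i = 0) \<and> n (k+1) mod 2 = a}.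
      (let N = (\<lambda>i. \<Sum>j = i..k+1. n j) in
       q ^ (\<Sum>i = 1..k+1. (N i)^2) * qpoch q q (2*M) * inv_qfac q (int M - int (N 1))
       / ((\<Prod>i = 1..k. qpoch q q (n i)) * qpoch (q^2) (q^2) (n (k+1)) * qpoch q (q^2) (n k + n (k+1)))))
   = qpoch q q (2*M) * multisum q k a M"
proof -
  define P where "P = qpoch q q (2*M)"
  have "(\<Sum>\<^sub>\<infinity>n \<in> index_set k a. P * (inv_qfac q (int M - int (tail_sum k n 1)) * weight q k n))
      = (\<Sum>\<^sub>\<infinity>n \<in> bounded_index_set k a M. P * (inv_qfac q (int M - int (tail_sum k n 1)) * weight q k n))"
  proof (rule infsum_cong_neutral)
    fix n assume "n \<in> index_set k a - bounded_index_set k a M"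
    hence "inv_qfac q (int M - int (tail_sum k n 1)) = 0"
      by (intro inv_qfac_outside_bounded) auto
    thus "P * (inv_qfac q (int M - int (tail_sum k n 1)) * weight q k n) = 0" by simp
  qed (auto simp: bounded_index_set_def)
  also have "\<dots> = P * multisum q k a M"
    by (simp add: bounded_index_set_finite multisum_def sum_distrib_left)
  finally show ?thesis
    by (simp add: Let_def tail_sum_def weight_def P_def index_set_def ac_simps)
qed

lemma qfac_times_beta:
  assumes q: "norm q < 1" and a: "a \<le> 1"
  shows "qpoch q q (2*M) * beta q a k M
     = (\<Sum>\<^sub>\<infinity>j. q powi (expA k a j) * qbinom q (2*int M) (int M - 6*j + int a))
     - (\<Sum>\<^sub>\<infinity>j. q powi (expB k a j) * qbinom q (2*int M) (int M - 6*j + int a + 2))"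
proof -
  have "qpoch q q (2*M) * beta q a k M
     = (\<Sum>\<^sub>\<infinity>j. q powi (expA k a j) * qbinom q (2*int M) (int M - (6*j - int a)))
     - (\<Sum>\<^sub>\<infinity>j. q powi (expB k a j) * qbinom q (2*int M) (int M - (6*j - int a - 2)))"
    unfolding beta_expansion[OF q a] right_diff_distrib infsum_cmult_right'[symmetric]
    by (simp add: mult.left_commute[of "qpoch q q (2*M)"] qfac_times_hpair)
  moreover have "int M - (6*j - int a) = int M - 6*j + int a"
    "int M - (6*j - int a - 2) = int M - 6*j + int a + 2" for j :: int by simp_all
  ultimately show ?thesis by (simp only:)
qed

theorem mainTheorem13:
  fixes q :: complex and k a M :: nat
  assumes hq: "norm q < 1" and hk: "k \<ge> 1" and ha: "a \<in> {0, 1}"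
  defines "\<delta> \<equiv> (if a = 1 then 1 else 0 :: int)"
  shows "(\<Sum>\<^sub>\<infinity>n \<in> {n :: nat \<Rightarrow> nat. (\<forall>i. i \<notin> {1..k+1} \<longrightarrow> n i = 0) \<and> n (k+1) mod 2 = a}.
            (let N = (\<lambda>i. \<Sum>j = i..k+1. n j) in
             q ^ (\<Sum>i = 1..k+1. (N i)^2) * qpoch q q (2*M)
             * inv_qfac q (int M - int (N 1))
             / ((\<Prod>i = 1..k. qpoch q q (n i)) * qpoch (q^2) (q^2) (n (k+1))
                * qpoch q (q^2) (n k + n (k+1)))))
       = (\<Sum>\<^sub>\<infinity>j :: int.
            q powi (12*(2+3*int k)*j^2 + 2*j*(1 - 6*\<delta>*(1+int k)) + (1+int k)*\<delta>)
            * qbinom q (2*int M) (int M - 6*j + int a))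
         - (\<Sum>\<^sub>\<infinity>j :: int.
            q powi (12*(2+3*int k)*j^2 + 2*j*(-7 - 12*int k - 6*\<delta>*(1+int k)) + 2
                    + int k*(int a+2)^2 + 5*\<delta>)
            * qbinom q (2*int M) (int M - 6*j + int a + 2))"
proof -
  have a: "a \<le> 1" using ha by auto
  have \<delta>: "\<delta> = int a" using ha by (auto simp: \<delta>_def)
  show ?thesis
    unfolding infsum_eq_multisum multisum_eq_beta[OF hq hk] qfac_times_beta[OF hq a]
      expA_def expB_def \<delta> ..
qed

end
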